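(* Backward proof search in $\mathsf{G}(\mathbf{K}_D)$ and in $\mathsf{G}(\mathbf{KD}_D)$ always terminates: for each of these two calculi, there is no infinite sequence of sequents $S_0,S_1,S_2,\dots$ such that, for every $i$, $S_{i+1}$ is a premise of some instance of a rule of the calculus whose conclusion is $S_i$.
   Context: Language: fix a finite nonempty set $\mathsf{Agt}$ of agents and a countable set $\mathsf{Prop}$ of propositional variables; $\mathsf{Grp}$ is the set of nonempty subsets of $\mathsf{Agt}$. Formulas: $\alpha::=p\mid\bot\mid\alpha\wedge\alpha\mid\alpha\vee\alpha\mid\alpha\rightarrow\alpha\mid\neg\alpha\mid D_G\alpha$ ($p\in\mathsf{Prop}$, $G\in\mathsf{Grp}$). Outmost-boxed formula: one of the form $D_G\gamma$. Sequent calculi (sequents $\Gamma\Rightarrow\Delta$ are pairs of finite multisets): $\mathsf{G}(\mathbf{K}_D)$ has initial sequents $\Gamma,p\Rightarrow p,\Delta$ and $\bot,\Gamma\Rightarrow\Delta$; rules $(R\wedge)$ from $\Gamma\Rightarrow\Delta,\alpha_1$ and $\Gamma\Rightarrow\Delta,\alpha_2$ infer $\Gamma\Rightarrow\Delta,\alpha_1\wedge\alpha_2$; $(L\wedge)$ from $\alpha_1,\alpha_2,\Gamma\Rightarrow\Delta$ infer $\alpha_1\wedge\alpha_2,\Gamma\Rightarrow\Delta$; $(R\vee)$ from $\Gamma\Rightarrow\Delta,\alpha_1,\alpha_2$ infer $\Gamma\Rightarrow\Delta,\alpha_1\vee\alpha_2$; $(L\vee)$ from $\alpha_1,\Gamma\Rightarrow\Delta$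 and $\alpha_2,\Gamma\Rightarrow\Delta$ infer $\alpha_1\vee\alpha_2,\Gamma\Rightarrow\Delta$; $(R\rightarrow)$ from $\alpha_1,\Gamma\Rightarrow\Delta,\alpha_2$ infer $\Gamma\Rightarrow\Delta,\alpha_1\rightarrow\alpha_2$; $(L\rightarrow)$ from $\Gamma\Rightarrow\Delta,\alpha_1$ and $\alpha_2,\Gamma\Rightarrow\Delta$ infer $\alpha_1\rightarrow\alpha_2,\Gamma\Rightarrow\Delta$; $(R\neg)$ from $\alpha,\Gamma\Rightarrow\Delta$ infer $\Gamma\Rightarrow\Delta,\neg\alpha$; $(L\neg)$ from $\Gamma\Rightarrow\Delta,\alpha$ infer $\neg\alpha,\Gamma\Rightarrow\Delta$; $(D_K)$: from $\alpha_1,\dots,\alpha_n\Rightarrow\beta$ ($n\ge0$) infer $\Sigma,D_{G_1}\alpha_1,\dots,D_{G_n}\alpha_n\Rightarrow D_G\beta,\Omega$ where all $G_i\subseteq G$, $\Sigma$ consists only of propositional variables, $\bot$, and $D_H\gamma$ with $H\not\subseteq G$, and $\Omega$ only of propositional variables, $\bot$, outmost-boxed formulas. $\mathsf{G}(\mathbf{KD}_D)$ adds $(D_D)$: from $\Gamma\Rightarrow$ with $\Gamma\neq\emptyset$ infer $\Sigma,D_{\{a\}}\Gamma\Rightarrow\Omega$ ($a\in\mathsf{Agt}$, $D_{\{a\}}\Gamma=\{D_{\{a\}}\gamma:\gamma\in\Gamma\}$), $\Sigma$ only propositional variables, $\bot$, $D_H\gamma$ with $H\neq\{a\}$; $\Omega$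 only propositional variables, $\bot$, outmost-boxed formulas. *)

theory Defs
  imports Main "HOL-Library.Multiset" "HOL-Library.Countable"
begin

text \<open>Agents: a finite (nonempty, as every type) type 'ag; propositional variables:
  a countable type 'p.  Groups are nonempty sets of agents.\<close>

datatype ('ag, 'p) fm =
    Atom 'p
  | Bot
  | Conj "('ag, 'p) fm" "('ag, 'p) fm"
  | Disj "('ag, 'p) fm" "('ag, 'p) fm"
  | Imp "('ag, 'p) fm" "('ag, 'p) fm"
  | Neg "('ag, 'p) fm"
  | D "'ag set" "('ag, 'p) fm"

fun wf_fm :: "('ag, 'p) fm \<Rightarrow> bool" where
  "wf_fm (Atom p) = True"
| "wf_fm Bot = True"
| "wf_fm (Conj a b) = (wf_fm a \<and> wf_fm b)"
| "wf_fm (Disj a b) = (wf_fm a \<and> wf_fm b)"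
| "wf_fm (Imp a b) = (wf_fm a \<and> wf_fm b)"
| "wf_fm (Neg a) = wf_fm a"
| "wf_fm (D G a) = (G \<noteq> {} \<and> wf_fm a)"

type_synonym ('ag, 'p) sequent = "('ag, 'p) fm multiset \<times> ('ag, 'p) fm multiset"

definition wf_seq :: "('ag, 'p) sequent \<Rightarrow> bool" where
  "wf_seq S \<longleftrightarrow> (\<forall>a \<in># fst S. wf_fm a) \<and> (\<forall>a \<in># snd S. wf_fm a)"

definition atom_or_bot :: "('ag, 'p) fm \<Rightarrow> bool" where
  "atom_or_bot a \<longleftrightarrow> (\<exists>p. a = Atom p) \<or> a = Bot"

definition boxed :: "('ag, 'p) fm \<Rightarrow> bool" where
  "boxed a \<longleftrightarrow> (\<exists>H g. a = D H g)"

inductive rule_K :: "('ag, 'p) sequent list \<Rightarrow> ('ag, 'p) sequent \<Rightarrow> bool" where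
  init_atom: "rule_K [] (add_mset (Atom p) \<Gamma>, add_mset (Atom p) \<Delta>)"
| init_bot: "rule_K [] (add_mset Bot \<Gamma>, \<Delta>)"
| R_conj: "rule_K [(\<Gamma>, add_mset a1 \<Delta>), (\<Gamma>, add_mset a2 \<Delta>)] (\<Gamma>, add_mset (Conj a1 a2) \<Delta>)"
| L_conj: "rule_K [(add_mset a1 (add_mset a2 \<Gamma>), \<Delta>)] (add_mset (Conj a1 a2) \<Gamma>, \<Delta>)"
| R_disj: "rule_K [(\<Gamma>, add_mset a1 (add_mset a2 \<Delta>))] (\<Gamma>, add_mset (Disj a1 a2) \<Delta>)"
| L_disj: "rule_K [(add_mset a1 \<Gamma>, \<Delta>), (add_mset a2 \<Gamma>, \<Delta>)] (add_mset (Disj a1 a2) \<Gamma>, \<Delta>)"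
| R_imp: "rule_K [(add_mset a1 \<Gamma>, add_mset a2 \<Delta>)] (\<Gamma>, add_mset (Imp a1 a2) \<Delta>)"
| L_imp: "rule_K [(\<Gamma>, add_mset a1 \<Delta>), (add_mset a2 \<Gamma>, \<Delta>)] (add_mset (Imp a1 a2) \<Gamma>, \<Delta>)"
| R_neg: "rule_K [(add_mset a \<Gamma>, \<Delta>)] (\<Gamma>, add_mset (Neg a) \<Delta>)"
| L_neg: "rule_K [(\<Gamma>, add_mset a \<Delta>)] (add_mset (Neg a) \<Gamma>, \<Delta>)"
| DK: "\<lbrakk> \<forall>(H, a) \<in> set xs. H \<subseteq> G;
         \<forall>s \<in># \<Sigma>. atom_or_bot s \<or> (\<exists>H g. s = D H g \<and> \<not> H \<subseteq> G);
         \<forall>w \<in># \<Omega>. atom_or_bot w \<or> boxed w \<rbrakk>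
       \<Longrightarrow> rule_K [(mset (map snd xs), {# b #})]
             (\<Sigma> + mset (map (\<lambda>(H, a). D H a) xs), add_mset (D G b) \<Omega>)"

inductive rule_KD :: "('ag, 'p) sequent list \<Rightarrow> ('ag, 'p) sequent \<Rightarrow> bool" where
  from_K: "rule_K ps c \<Longrightarrow> rule_KD ps c"
| DD: "\<lbrakk> \<Gamma> \<noteq> {#};
         \<forall>s \<in># \<Sigma>. atom_or_bot s \<or> (\<exists>H g. s = D H g \<and> H \<noteq> {ag});
         \<forall>w \<in># \<Omega>. atom_or_bot w \<or> boxed w \<rbrakk>
       \<Longrightarrow> rule_KD [(\<Gamma>, {#})] (\<Sigma> + image_mset (D {ag}) \<Gamma>, \<Omega>)"

definition infinite_branch ::
  "(('ag, 'p) sequent list \<Rightarrow> ('ag, 'p) sequent \<Rightarrow> bool) \<Rightarrow> (nat \<Rightarrow> ('ag, 'p) sequent) \<Rightarrow> bool" where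
  "infinite_branch R S \<longleftrightarrow> (\<forall>i. wf_seq (S i)) \<and> (\<forall>i. \<exists>ps. R ps (S i) \<and> S (Suc i) \<in> set ps)"

end

theory Submission
  imports Defs
begin

text \<open>Measure a sequent by the total size of its formulas.  In every rule instance of either
  calculus each premise is strictly smaller than the conclusion: a propositional rule removes
  one connective, (D_K) strips the box of the principal formula and of every boxed antecedent
  it keeps, and (D_D) strips one box from each formula of \<open>\<Gamma>\<close>, which is strict because \<open>\<Gamma>\<close> is
  nonempty.  A backward search branch therefore yields a strictly decreasing sequence of
  natural numbers, so it is finite.\<close>

lemma no_infinite_branch_if_premises_smaller:
  fixes f :: "('ag, 'p) sequent \<Rightarrow> nat"
  assumes premise_smaller: "\<And>ps c p. R ps c \<Longrightarrow> p \<in> set ps \<Longrightarrow> f p < f c"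
  shows "\<not> infinite_branch R S"
proof
  assume "infinite_branch R S"
  have "(S (Suc i), S i) \<in> measure f" for i
  proof -
    obtain ps where "R ps (S i)" and "S (Suc i) \<in> set ps"
      using \<open>infinite_branch R S\<close> unfolding infinite_branch_def by blast
    then show ?thesis
      using premise_smaller by simp
  qed
  then show False
    using wf_measure[of f] unfolding wf_iff_no_infinite_down_chain by blast
qed

definition sequent_size :: "('ag, 'p) sequent \<Rightarrow> nat" where
  "sequent_size S = (\<Sum>a\<in>#fst S + snd S. size a)"

lemma sum_mset_size_D_image:
  "(\<Sum>a\<in>#image_mset (D G) \<Gamma>. size a) = (\<Sum>a\<in>#\<Gamma>. size a) + size \<Gamma>"
  by (induction \<Gamma>) auto

lemma sum_mset_size_D_pairs:
  "(\<Sum>a\<in>#image_mset (\<lambda>(H, a). D H a) M. size a) = (\<Sum>a\<in>#image_mset snd M. size a) + size M"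
  by (induction M) auto

lemma rule_K_premise_smaller:
  assumes "rule_K ps c" and "p \<in> set ps"
  shows "sequent_size p < sequent_size c"
  using assms
proof (induction rule: rule_K.induct)
  case (DK xs G \<Sigma> \<Omega> b)
  then show ?case by (simp add: sequent_size_def sum_mset_size_D_pairs)
qed (auto simp: sequent_size_def)

lemma rule_KD_premise_smaller:
  assumes "rule_KD ps c" and "p \<in> set ps"
  shows "sequent_size p < sequent_size c"
  using assms
proof (induction rule: rule_KD.induct)
  case (from_K ps c)
  then show ?case by (rule rule_K_premise_smaller)
next
  case (DD \<Gamma> \<Sigma> ag \<Omega>)
  then show ?case by (simp add: sequent_size_def sum_mset_size_D_image nonempty_has_size)
qed

theorem proposition3p5:
  shows "\<not> (\<exists>S :: nat \<Rightarrow> ('ag :: finite, 'p :: countable) sequent. infinite_branch rule_K S)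
       \<and> \<not> (\<exists>S :: nat \<Rightarrow> ('ag :: finite, 'p :: countable) sequent. infinite_branch rule_KD S)"
  by (simp add: no_infinite_branch_if_premises_smaller[OF rule_K_premise_smaller]
      no_infinite_branch_if_premises_smaller[OF rule_KD_premise_smaller])

end
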